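(* Let $n\geqslant 2$ and fix a caterpillar species tree $S$ with $n$ leaves labeled by a set $X$. As $G$ ranges over all $n!/2$ caterpillar gene trees with leaves bijectively labeled by $X$, the distinct roadblock sets $B_{G,S}$ are in bijection with the monotonic lattice paths from $(0,0)$ to $(n-1,n-1)$ on the $(n-1)\times(n-1)$ lattice that do not cross above the diagonal $y=x$; in particular there are $C_{n-1}=\frac{1}{n}\binom{2n-2}{n-1}$ distinct roadblock sets.
   Context: All trees are binary, rooted, leaf-labeled. A caterpillar tree with $n$ leaves is a tree in which some internal node is descended from all other internal nodes. Its canonical label vector $(x_1,\dots,x_n)$ has $x_1,x_2$ the labels of the two leaves of the cherry (the unique internal node with exactly two descendant leaves) and, for $3\leqslant i\leqslant n$, $x_i$ the label of the leaf separated from the root by $n-i+1$ edges; vectors differing only by swapping $x_1,x_2$ describe the same tree. For caterpillars $G,S$ on the same label set with canonical vectors $\mathbf g,\mathbf s$, let $\sigma(x)$ be the index of label $x$ in $\mathbf s$, let $F(j)=\max\{\sigma(g_1),\dots,\sigma(g_{j+1})\}-1$ for $1\leqslant j\leqslant n-1$, and define the roadblock set $B_{G,S}=\{(i,j)\in\mathbb Z^2: 1\leqslant j\leqslant i\leqslant n-1,\ i<F(j)\}$. A monotonic path is a sequence of lattice points with steps $(1,0)$ or $(0,1)$; it does not cross above $y=x$ if all its points $(x,y)$ satisfy $y\leqslant x$. *)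

theory Defs
  imports Main
begin

text \<open>A caterpillar on the label set X is given by its canonical label vector
  (x_1,...,x_n), represented as a list of length n = card X whose entries are
  the labels of X, each exactly once. Vectors differing by a swap of x_1 and x_2
  describe the same tree.\<close>

definition cat_vecs :: "'a set \<Rightarrow> 'a list set" where
  "cat_vecs X = {g. distinct g \<and> set g = X}"

definition sigma :: "'a list \<Rightarrow> 'a \<Rightarrow> nat" where
  "sigma s x = (LEAST k. k < length s \<and> s ! k = x) + 1"

definition Ffun :: "'a list \<Rightarrow> 'a list \<Rightarrow> nat \<Rightarrow> int" where
  "Ffun g s j = int (Max {sigma s (g ! (k - 1)) | k. 1 \<le> k \<and> k \<le> j + 1}) - 1"

definition roadblock :: "'a list \<Rightarrow> 'a list \<Rightarrow> (int \<times> int) set" where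
  "roadblock g s = {(i, j). 1 \<le> j \<and> j \<le> i \<and> i \<le> int (length s) - 1
                        \<and> i < Ffun g s (nat j)}"

definition dyck_paths :: "nat \<Rightarrow> (int \<times> int) list set" where
  "dyck_paths m = {p. p \<noteq> [] \<and> hd p = (0, 0) \<and> last p = (int m, int m)
      \<and> (\<forall>k. Suc k < length p \<longrightarrow>
             (p ! Suc k = (fst (p ! k) + 1, snd (p ! k)) \<or>
              p ! Suc k = (fst (p ! k), snd (p ! k) + 1)))
      \<and> (\<forall>q \<in> set p. snd q \<le> fst q)}"

end

theory Submission
  imports Defs
begin

text \<open>The sequence \<open>F(1), \<dots>, F(n - 1)\<close> is nondecreasing with
  \<open>j \<le> F(j) \<le> n - 1\<close>, because \<open>F(j) + 1\<close> is the largest of \<open>j + 1\<close> distinct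
  positions in \<open>{1..n}\<close>. Column \<open>j\<close> of \<open>B\<^sub>G\<^sub>,\<^sub>S\<close> is the interval
  \<open>j \<le> i < F(j)\<close>, so the roadblock set and this sequence determine each other, and every
  such sequence arises from some \<open>G\<close>, since the prefix maxima of a permutation of positions can
  be prescribed subject only to these constraints. Such sequences and lattice paths below the
  diagonal both satisfy the recursion of the ballot numbers, and the diagonal ballot number is
  the Catalan number.\<close>

section \<open>Ballot numbers and lattice paths\<close>

fun ballot :: "nat \<Rightarrow> nat \<Rightarrow> nat" where
  "ballot a 0 = 1"
| "ballot 0 (Suc b) = 0"
| "ballot (Suc a) (Suc b) = (if b \<le> a then ballot a (Suc b) + ballot (Suc a) b else 0)"

lemma ballot_eq_binomial_diff:
  "b \<le> a + 1 \<Longrightarrow> int (ballot a b) =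
     (if b = 0 then 1 else int (a + b choose b) - int (a + b choose (b - 1)))"
proof (induction a b rule: ballot.induct)
  case (3 a b)
  show ?case
  proof (cases "b \<le> a")
    case True
    with "3.IH" have IH:
      "int (ballot a (Suc b)) = int (a + Suc b choose Suc b) - int (a + Suc b choose b)"
      "int (ballot (Suc a) b) =
         (if b = 0 then 1 else int (Suc a + b choose b) - int (Suc a + b choose (b - 1)))"
      by simp_all
    show ?thesis
    proof (cases b)
      case (Suc b')
      have "Suc a + Suc b choose Suc b = (a + Suc b choose Suc b) + (a + Suc b choose b)"
        "Suc a + Suc b choose b = (a + Suc b choose b) + (a + Suc b choose b')"
        using Suc by simp_all
      with IH True Suc show ?thesis by simp
    qed (use IH True in simp)
  next
    case False
    with "3.prems" have "b = Suc a" by simp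
    with False binomial_symmetric[of "Suc b" "Suc a + Suc b"] show ?thesis by simp
  qed
qed simp_all

lemma Suc_times_ballot_diag: "Suc m * ballot m m = 2 * m choose m"
proof (cases m)
  case (Suc k)
  have "int (ballot m m) = int (2 * m choose m) - int (2 * m choose (m - 1))"
    using ballot_eq_binomial_diff[of m m] Suc by (simp add: mult_2)
  moreover have "Suc m * (2 * m choose (m - 1)) = m * (2 * m choose m)"
    using Suc_times_binomial_add[of k m] Suc by (simp add: mult_2)
  then have "int (Suc m) * int (2 * m choose (m - 1)) = int m * int (2 * m choose m)"
    by (metis of_nat_mult)
  ultimately have "int (Suc m) * int (ballot m m) = int (2 * m choose m)"
    unfolding of_nat_Suc by algebra
  then show ?thesis by (metis of_nat_eq_iff of_nat_mult)
qed simp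

lemma ballot_diag_eq_catalan: "ballot m m = (2 * m choose m) div Suc m"
  by (metis Suc_times_ballot_diag nonzero_mult_div_cancel_left Zero_not_Suc)

definition unit_steps :: "(int \<times> int) list \<Rightarrow> bool" where
  "unit_steps p \<longleftrightarrow> (\<forall>k. Suc k < length p \<longrightarrow>
     p ! Suc k = (fst (p ! k) + 1, snd (p ! k)) \<or> p ! Suc k = (fst (p ! k), snd (p ! k) + 1))"

definition diag_paths :: "int \<Rightarrow> int \<Rightarrow> (int \<times> int) list set" where
  "diag_paths a b = {p. p \<noteq> [] \<and> hd p = (0, 0) \<and> last p = (a, b) \<and> unit_steps p
      \<and> (\<forall>q \<in> set p. snd q \<le> fst q)}"

lemma dyck_paths_eq_diag_paths: "dyck_paths m = diag_paths (int m) (int m)"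
  by (simp add: dyck_paths_def diag_paths_def unit_steps_def)

lemma unit_steps_nth_from_origin:
  assumes "unit_steps p" "p \<noteq> []" "hd p = (0, 0)" "k < length p"
  shows "fst (p ! k) + snd (p ! k) = int k \<and> 0 \<le> fst (p ! k) \<and> 0 \<le> snd (p ! k)"
  using assms(4)
proof (induction k)
  case 0
  with assms(2,3) show ?case by (simp add: hd_conv_nth[symmetric])
next
  case (Suc k)
  with assms(1) have "p ! Suc k = (fst (p ! k) + 1, snd (p ! k)) \<or>
      p ! Suc k = (fst (p ! k), snd (p ! k) + 1)"
    unfolding unit_steps_def by blast
  with Suc show ?case by auto
qed

lemma unit_steps_snoc:
  assumes "q \<noteq> []"
  shows "unit_steps (q @ [x]) \<longleftrightarrow> unit_steps q \<and>
    (x = (fst (last q) + 1, snd (last q)) \<or> x = (fst (last q), snd (last q) + 1))"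
proof -
  obtain k where k: "length q = Suc k" using assms by (cases q) auto
  then have "last q = q ! k" using assms by (simp add: last_conv_nth)
  with k show ?thesis
    unfolding unit_steps_def by (auto simp: nth_append less_Suc_eq)
qed

lemma diag_paths_origin: "diag_paths 0 0 = {[(0, 0)]}"
proof (intro equalityI subsetI)
  fix p assume "p \<in> diag_paths 0 0"
  then have p: "p \<noteq> []" "hd p = (0, 0)" "last p = (0, 0)" "unit_steps p"
    by (auto simp: diag_paths_def)
  then have "p ! (length p - 1) = (0, 0)" by (simp add: last_conv_nth)
  with unit_steps_nth_from_origin[OF p(4,1,2), of "length p - 1"] p(1)
  have "length p = 1" by (simp add: Suc_leI)
  with p(2) show "p \<in> {[(0, 0)]}" by (cases p) auto
qed (simp add: diag_paths_def unit_steps_def)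

lemma diag_paths_empty:
  assumes "a < 0 \<or> b < 0 \<or> a < b"
  shows "diag_paths a b = {}"
proof (rule ccontr)
  assume "diag_paths a b \<noteq> {}"
  then obtain p where p: "p \<noteq> []" "hd p = (0, 0)" "last p = (a, b)" "unit_steps p"
      "\<forall>x\<in>set p. snd x \<le> fst x"
    by (auto simp: diag_paths_def)
  then have "p ! (length p - 1) = (a, b)" by (simp add: last_conv_nth)
  with unit_steps_nth_from_origin[OF p(4,1,2), of "length p - 1"] p(1) have "0 \<le> a" "0 \<le> b"
    by auto
  moreover have "b \<le> a" using p(1,3,5) last_in_set by fastforce
  ultimately show False using assms by linarith
qed

lemma diag_paths_snoc_decomp:
  assumes "(a, b) \<noteq> (0, 0)" "b \<le> a"
  shows "diag_paths a b = (\<lambda>q. q @ [(a, b)]) ` (diag_paths (a - 1) b \<union> diag_paths a (b - 1))"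
proof (intro equalityI subsetI)
  fix p assume "p \<in> diag_paths a b"
  then have p: "p \<noteq> []" "hd p = (0, 0)" "last p = (a, b)" "unit_steps p"
      "\<forall>x\<in>set p. snd x \<le> fst x"
    by (auto simp: diag_paths_def)
  define q where "q = butlast p"
  have pq: "p = q @ [(a, b)]" using p(1,3) unfolding q_def by (metis append_butlast_last_id)
  with p(2) assms(1) have "q \<noteq> []" by auto
  with p pq unit_steps_snoc[of q "(a, b)"] have "q \<in> diag_paths (a - 1) b \<union> diag_paths a (b - 1)"
    by (cases "last q") (auto simp: diag_paths_def)
  with pq show "p \<in> (\<lambda>q. q @ [(a, b)]) ` (diag_paths (a - 1) b \<union> diag_paths a (b - 1))"
    by blast
next
  fix p assume "p \<in> (\<lambda>q. q @ [(a, b)]) ` (diag_paths (a - 1) b \<union> diag_paths a (b - 1))"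
  then obtain q where q: "p = q @ [(a, b)]" "q \<in> diag_paths (a - 1) b \<union> diag_paths a (b - 1)"
    by blast
  then have "q \<noteq> []" by (auto simp: diag_paths_def)
  with q assms(2) unit_steps_snoc[of q "(a, b)"] show "p \<in> diag_paths a b"
    by (auto simp: diag_paths_def)
qed

lemma card_snoc_image_Un:
  assumes "finite A" "finite B" "A \<inter> B = {}"
  shows "card ((\<lambda>q. q @ [x]) ` (A \<union> B)) = card A + card B"
proof -
  have "inj_on (\<lambda>q. q @ [x]) (A \<union> B)" by (auto simp: inj_on_def)
  with assms show ?thesis by (simp add: card_image card_Un_disjoint)
qed

lemma card_diag_paths_axis: "finite (diag_paths (int a) 0) \<and> card (diag_paths (int a) 0) = 1"
proof (induction a)
  case (Suc a)
  have "diag_paths (int (Suc a)) 0 = (\<lambda>q. q @ [(int (Suc a), 0)]) ` diag_paths (int a) 0"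
    using diag_paths_snoc_decomp[of "int (Suc a)" 0] diag_paths_empty[of _ "-1"] by simp
  with Suc show ?case by (simp add: card_image inj_on_def)
qed (simp add: diag_paths_origin)

lemma card_diag_paths:
  "finite (diag_paths (int a) (int b)) \<and> card (diag_paths (int a) (int b)) = ballot a b"
proof (induction a b rule: ballot.induct)
  case (3 a b)
  show ?case
  proof (cases "b \<le> a")
    case True
    have "diag_paths (int a) (int (Suc b)) \<inter> diag_paths (int (Suc a)) (int b) = {}"
      by (auto simp: diag_paths_def)
    with 3 True diag_paths_snoc_decomp[of "int (Suc a)" "int (Suc b)"] show ?thesis
      by (simp add: card_snoc_image_Un)
  next
    case False
    then show ?thesis using diag_paths_empty[of "int (Suc a)" "int (Suc b)"] by simp
  qed
qed (simp_all add: card_diag_paths_axis diag_paths_empty)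

section \<open>Ballot sequences\<close>

definition ballot_seqs :: "nat \<Rightarrow> nat \<Rightarrow> nat list set" where
  "ballot_seqs k c =
    {t. length t = k \<and> sorted t \<and> (\<forall>i<k. Suc i \<le> t ! i) \<and> (\<forall>x\<in>set t. x \<le> c)}"

lemma ballot_seqs_empty:
  assumes "c < k"
  shows "ballot_seqs k c = {}"
proof (rule ccontr)
  assume "ballot_seqs k c \<noteq> {}"
  then obtain t where t: "length t = k" "\<forall>i<k. Suc i \<le> t ! i" "\<forall>x\<in>set t. x \<le> c"
    by (auto simp: ballot_seqs_def)
  from assms have "k - 1 < k" by simp
  with t have "Suc (k - 1) \<le> t ! (k - 1)" "t ! (k - 1) \<le> c" by (blast, simp)
  with assms show False by linarith
qed

lemma ballot_seqs_decomp:
  assumes "0 < k" "k \<le> c"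
  shows "ballot_seqs k c = (\<lambda>t. t @ [c]) ` ballot_seqs (k - 1) c \<union> ballot_seqs k (c - 1)"
proof (intro equalityI subsetI)
  fix t assume t: "t \<in> ballot_seqs k c"
  then have l: "length t = k" and so: "sorted t" and lb: "\<forall>i<k. Suc i \<le> t ! i"
    and ub: "\<forall>x\<in>set t. x \<le> c"
    by (auto simp: ballot_seqs_def)
  obtain t' x where tx: "t = t' @ [x]"
    using l assms(1) by (metis length_0_conv neq0_conv rev_exhaust)
  show "t \<in> (\<lambda>t. t @ [c]) ` ballot_seqs (k - 1) c \<union> ballot_seqs k (c - 1)"
  proof (cases "x = c")
    case True
    have "\<forall>i<k - 1. Suc i \<le> t' ! i"
    proof (intro allI impI)
      fix i assume "i < k - 1"
      with lb l tx show "Suc i \<le> t' ! i" by (auto simp: nth_append dest: spec[of _ i])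
    qed
    then have "t' \<in> ballot_seqs (k - 1) c"
      using l so ub tx by (auto simp: ballot_seqs_def sorted_append)
    with tx True show ?thesis by blast
  next
    case False
    with ub tx have "x < c" by fastforce
    moreover have "\<forall>y\<in>set t. y \<le> x" using so tx by (auto simp: sorted_append)
    ultimately have "\<forall>y\<in>set t. y \<le> c - 1" by fastforce
    with l so lb show ?thesis by (auto simp: ballot_seqs_def)
  qed
next
  fix t assume "t \<in> (\<lambda>t. t @ [c]) ` ballot_seqs (k - 1) c \<union> ballot_seqs k (c - 1)"
  then show "t \<in> ballot_seqs k c"
  proof
    assume "t \<in> (\<lambda>t. t @ [c]) ` ballot_seqs (k - 1) c"
    then obtain t' where t': "t = t' @ [c]" "length t' = k - 1" "sorted t'"
        "\<forall>i<k - 1. Suc i \<le> t' ! i" "\<forall>x\<in>set t'. x \<le> c"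
      by (auto simp: ballot_seqs_def)
    then have "\<forall>i<k. Suc i \<le> t ! i"
      using assms by (auto simp: nth_append less_Suc_eq)
    with t' assms show ?thesis by (auto simp: ballot_seqs_def sorted_append)
  qed (auto simp: ballot_seqs_def)
qed

lemma card_ballot_seqs: "finite (ballot_seqs k c) \<and> card (ballot_seqs k c) = ballot c k"
proof (induction c k rule: ballot.induct)
  case (1 a)
  have "ballot_seqs 0 a = {[]}" by (auto simp: ballot_seqs_def)
  then show ?case by simp
next
  case (3 a b)
  show ?case
  proof (cases "b \<le> a")
    case True
    have "(\<lambda>t. t @ [Suc a]) ` ballot_seqs b (Suc a) \<inter> ballot_seqs (Suc b) a = {}"
      by (auto simp: ballot_seqs_def)
    moreover have "inj_on (\<lambda>t. t @ [Suc a]) (ballot_seqs b (Suc a))"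
      by (auto simp: inj_on_def)
    ultimately show ?thesis
      using 3 True ballot_seqs_decomp[of "Suc b" "Suc a"] by (simp add: card_Un_disjoint card_image)
  next
    case False
    then show ?thesis using ballot_seqs_empty[of "Suc a" "Suc b"] by simp
  qed
qed (simp add: ballot_seqs_empty)

lemma exists_distinct_with_prefix_Max:
  assumes "sorted u" "\<forall>i<length u. Suc i \<le> u ! i \<and> u ! i \<le> N"
  shows "\<exists>p. length p = length u \<and> distinct p \<and> set p \<subseteq> {1..N} \<and>
    (\<forall>i<length u. Max (set (take (Suc i) p)) = u ! i)"
  using assms
proof (induction u rule: rev_induct)
  case (snoc x u)
  have bounds: "\<forall>i<length u. Suc i \<le> u ! i \<and> u ! i \<le> N"
  proof (intro allI impI)
    fix i assume "i < length u"
    with snoc.prems(2)[rule_format, of i] show "Suc i \<le> u ! i \<and> u ! i \<le> N"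
      by (simp add: nth_append)
  qed
  have "sorted u" using snoc.prems(1) by (simp add: sorted_append)
  with bounds snoc.IH obtain p where p: "length p = length u" "distinct p" "set p \<subseteq> {1..N}"
    "\<forall>i<length u. Max (set (take (Suc i) p)) = u ! i" by blast
  have x: "Suc (length u) \<le> x" "x \<le> N"
    using snoc.prems(2)[rule_format, of "length u"] by simp_all
  have below_x: "v \<le> x" if "v \<in> set p" for v
  proof -
    from that p(1) obtain i where i: "i < length u" "v = p ! i" by (auto simp: in_set_conv_nth)
    then have "v \<in> set (take (Suc i) p)" using p(1) by (simp add: take_Suc_conv_app_nth)
    then have "v \<le> Max (set (take (Suc i) p))" by simp
    also have "\<dots> = u ! i" using p(4) i(1) by blast
    also have "\<dots> \<le> x" using snoc.prems(1) i(1) by (simp add: sorted_append)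
    finally show ?thesis .
  qed
  \<comment> \<open>Append \<open>x\<close> itself if it is new; otherwise the prefix maximum is already \<open>x\<close> and any
    unused value below \<open>x\<close> will do, which exists since \<open>p\<close> has fewer than \<open>x\<close> entries.\<close>
  obtain y where y: "y \<in> {1..x}" "y \<notin> set p" "x \<in> set p \<or> y = x"
  proof (cases "x \<in> set p")
    case True
    have "card (set p) < card {1..x}" using p(1,2) x(1) by (simp add: distinct_card)
    then have "\<not> {1..x} \<subseteq> set p" by (metis card_mono List.finite_set not_le)
    then obtain y where "y \<in> {1..x}" "y \<notin> set p" by blast
    with True that show ?thesis by blast
  next
    case False
    with that[of x] x(1) show ?thesis by simp
  qed
  have "Max (set (p @ [y])) = x"
    using y below_x by (intro Max_eqI) auto
  then have "\<forall>i<length (u @ [x]). Max (set (take (Suc i) (p @ [y]))) = (u @ [x]) ! i"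
    using p(1,4) by (auto simp: nth_append less_Suc_eq)
  with p y x(2) show ?case by (intro exI[of _ "p @ [y]"]) auto
qed simp

section \<open>Roadblock sets\<close>

lemma sigma_nth:
  assumes "distinct s" "i < length s"
  shows "sigma s (s ! i) = Suc i"
proof -
  have "(LEAST k. k < length s \<and> s ! k = s ! i) = i"
    by (rule Least_equality) (use assms in \<open>auto simp: nth_eq_iff_index_eq\<close>)
  then show ?thesis by (simp add: sigma_def)
qed

lemma sigma_in_set:
  assumes "distinct s" "x \<in> set s"
  shows "sigma s x \<in> {1..length s} \<and> s ! (sigma s x - 1) = x"
proof -
  from assms(2) obtain i where "i < length s" "x = s ! i" by (auto simp: in_set_conv_nth)
  with sigma_nth[OF assms(1)] show ?thesis by simp
qed

lemma inj_on_sigma: "distinct s \<Longrightarrow> inj_on (sigma s) (set s)"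
  by (metis inj_onI sigma_in_set)

definition prefix_positions :: "'a list \<Rightarrow> 'a list \<Rightarrow> nat \<Rightarrow> nat set" where
  "prefix_positions s g j = sigma s ` set (take (Suc j) g)"

lemma Ffun_eq_Max_prefix_positions:
  assumes "j < length g"
  shows "Ffun g s j = int (Max (prefix_positions s g j)) - 1"
proof -
  have "set (take (Suc j) g) = (\<lambda>k. g ! (k - 1)) ` {1..j + 1}"
  proof (intro equalityI subsetI)
    fix x assume "x \<in> set (take (Suc j) g)"
    then obtain i where "i \<le> j" "x = g ! i" using assms by (auto simp: in_set_conv_nth less_Suc_eq_le)
    then show "x \<in> (\<lambda>k. g ! (k - 1)) ` {1..j + 1}" by (intro image_eqI[of _ _ "Suc i"]) auto
  next
    fix x assume "x \<in> (\<lambda>k. g ! (k - 1)) ` {1..j + 1}"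
    then obtain k where "1 \<le> k" "k \<le> j + 1" "x = take (Suc j) g ! (k - 1)" by auto
    moreover from \<open>1 \<le> k\<close> \<open>k \<le> j + 1\<close> assms have "k - 1 < length (take (Suc j) g)" by simp
    ultimately show "x \<in> set (take (Suc j) g)" by (metis nth_mem)
  qed
  then have "{sigma s (g ! (k - 1)) | k. 1 \<le> k \<and> k \<le> j + 1} = prefix_positions s g j"
    unfolding prefix_positions_def by auto
  then show ?thesis by (simp add: Ffun_def)
qed

lemma Max_prefix_positions_bounds:
  assumes "distinct s" "distinct g" "set g = set s" "j < length s"
  shows "Suc j \<le> Max (prefix_positions s g j) \<and> Max (prefix_positions s g j) \<le> length s"
proof -
  let ?V = "prefix_positions s g j"
  have lg: "length g = length s" using assms(1-3) by (metis distinct_card)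
  have sub: "set (take (Suc j) g) \<subseteq> set s" using assms(3) by (metis set_take_subset)
  then have "inj_on (sigma s) (set (take (Suc j) g))"
    using inj_on_sigma[OF assms(1)] by (rule inj_on_subset[rotated])
  then have card: "card ?V = Suc j"
    using assms(2,4) lg by (simp add: prefix_positions_def card_image distinct_card)
  then have ne: "?V \<noteq> {}" by auto
  have range: "?V \<subseteq> {1..length s}"
    unfolding prefix_positions_def using sigma_in_set[OF assms(1)] sub by blast
  have "?V \<subseteq> {1..Max ?V}" using range by (auto simp: prefix_positions_def)
  then have "Suc j \<le> Max ?V" using card card_mono[of "{1..Max ?V}" ?V] by simp
  moreover have "Max ?V \<le> length s" using range ne Max_in[of ?V] by (auto simp: prefix_positions_def)
  ultimately show ?thesis ..
qed

definition F_seq :: "'a list \<Rightarrow> 'a list \<Rightarrow> nat list" where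
  "F_seq g s = map (\<lambda>j. nat (Ffun g s j)) [1..<length s]"

lemma F_seq_nth:
  assumes "distinct s" "distinct g" "set g = set s" "i < length s - 1"
  shows "F_seq g s ! i = Max (prefix_positions s g (Suc i)) - 1"
proof -
  have "length g = length s" using assms(1-3) by (metis distinct_card)
  with assms(4) show ?thesis
    by (simp add: F_seq_def Ffun_eq_Max_prefix_positions nat_diff_distrib)
qed

lemma F_seq_in_ballot_seqs:
  assumes "distinct s" "distinct g" "set g = set s"
  shows "F_seq g s \<in> ballot_seqs (length s - 1) (length s - 1)"
proof -
  let ?n = "length s"
  have len: "length (F_seq g s) = ?n - 1" by (simp add: F_seq_def)
  have "sorted (F_seq g s)" unfolding sorted_iff_nth_mono
  proof (intro allI impI)
    fix i j assume ij: "i \<le> j" "j < length (F_seq g s)"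
    have "prefix_positions s g (Suc i) \<subseteq> prefix_positions s g (Suc j)"
      unfolding prefix_positions_def using ij by (intro image_mono set_take_subset_set_take) simp
    moreover have "g \<noteq> []" using assms(3) ij len by auto
    then have "prefix_positions s g (Suc i) \<noteq> {}" by (simp add: prefix_positions_def)
    ultimately have "Max (prefix_positions s g (Suc i)) \<le> Max (prefix_positions s g (Suc j))"
      by (intro Max_mono) (simp_all add: prefix_positions_def)
    then show "F_seq g s ! i \<le> F_seq g s ! j" using F_seq_nth[OF assms] ij len by simp
  qed
  moreover have "Suc i \<le> F_seq g s ! i \<and> F_seq g s ! i \<le> ?n - 1" if "i < ?n - 1" for i
  proof -
    from that have "Suc i < ?n" by simp
    with F_seq_nth[OF assms that] Max_prefix_positions_bounds[OF assms, of "Suc i"] show ?thesis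
      by linarith
  qed
  ultimately show ?thesis
    using len by (auto simp: ballot_seqs_def in_set_conv_nth)
qed

definition roadblock_of_seq :: "nat \<Rightarrow> nat list \<Rightarrow> (int \<times> int) set" where
  "roadblock_of_seq n t =
    {(i, j). 1 \<le> j \<and> j \<le> i \<and> i \<le> int n - 1 \<and> i < int (t ! (nat j - 1))}"

lemma roadblock_eq_roadblock_of_seq:
  assumes "distinct s" "distinct g" "set g = set s"
  shows "roadblock g s = roadblock_of_seq (length s) (F_seq g s)"
proof -
  have "int (F_seq g s ! (nat j - 1)) = Ffun g s (nat j)"
    if "1 \<le> j" "j \<le> int (length s) - 1" for j
  proof -
    from that have j: "nat j - 1 < length s - 1" "Suc (nat j - 1) = nat j" "nat j < length s"
      by linarith+
    have "length g = length s" using assms by (metis distinct_card)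
    with j have "Ffun g s (nat j) = int (Max (prefix_positions s g (nat j))) - 1"
      by (simp add: Ffun_eq_Max_prefix_positions)
    moreover have "1 \<le> Max (prefix_positions s g (nat j))"
      using Max_prefix_positions_bounds[OF assms j(3)] by linarith
    ultimately show ?thesis using F_seq_nth[OF assms j(1)] j(2) by simp
  qed
  then show ?thesis unfolding roadblock_def roadblock_of_seq_def by force
qed

lemma inj_on_roadblock_of_seq: "inj_on (roadblock_of_seq n) (ballot_seqs (n - 1) (n - 1))"
proof (rule inj_onI)
  fix t t' assume t: "t \<in> ballot_seqs (n - 1) (n - 1)" and t': "t' \<in> ballot_seqs (n - 1) (n - 1)"
    and eq: "roadblock_of_seq n t = roadblock_of_seq n t'"
  have "\<not> a ! k < b ! k"
    if a: "a \<in> ballot_seqs (n - 1) (n - 1)" and b: "b \<in> ballot_seqs (n - 1) (n - 1)"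
      and eq: "roadblock_of_seq n a = roadblock_of_seq n b" and k: "k < n - 1" for a b k
  proof
    assume lt: "a ! k < b ! k"
    have "Suc k \<le> a ! k" "b ! k \<le> n - 1" using a b k by (auto simp: ballot_seqs_def)
    moreover have "nat (int (Suc k)) - 1 = k" by simp
    ultimately have "(int (b ! k) - 1, int (Suc k)) \<in> roadblock_of_seq n b - roadblock_of_seq n a"
      using lt unfolding roadblock_of_seq_def by auto
    with eq show False by simp
  qed
  from this[OF t t' eq] this[OF t' t eq[symmetric]] t t' show "t = t'"
    by (intro nth_equalityI) (auto simp: ballot_seqs_def not_less intro: antisym)
qed

lemma exists_list_with_positions:
  assumes "distinct s" "distinct p" "set p = {1..length s}"
  shows "\<exists>g. distinct g \<and> set g = set s \<and> map (sigma s) g = p"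
proof -
  define g where "g = map (\<lambda>v. s ! (v - 1)) p"
  have pos: "v - 1 < length s" "Suc (v - 1) = v" if "v \<in> set p" for v
    using that assms(3) by auto
  then have positions: "map (sigma s) g = p"
    by (simp add: g_def map_idI sigma_nth[OF assms(1)])
  then have dg: "distinct g" using assms(2) by (metis distinct_map)
  have "set g = set s"
  proof (rule card_subset_eq)
    show "set g \<subseteq> set s" using pos(1) by (auto simp: g_def)
    have "length p = length s" using assms(2,3) distinct_card by fastforce
    then show "card (set g) = card (set s)"
      using distinct_card[OF dg] distinct_card[OF assms(1)] by (simp add: g_def)
  qed simp
  with dg positions show ?thesis by blast
qed

lemma F_seq_surj:
  assumes "distinct s" "2 \<le> length s" "t \<in> ballot_seqs (length s - 1) (length s - 1)"
  shows "\<exists>g. distinct g \<and> set g = set s \<and> F_seq g s = t"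
proof -
  let ?n = "length s"
  from assms(3) have t: "length t = ?n - 1" "sorted t" "\<forall>i<?n - 1. Suc i \<le> t ! i"
      "\<forall>x\<in>set t. x \<le> ?n - 1"
    by (auto simp: ballot_seqs_def)
  \<comment> \<open>The prefix maxima of the positions of \<open>g\<close> in \<open>s\<close>; \<open>F\<close> does not see the first.\<close>
  define u where "u = Suc (t ! 0) # map Suc t"
  have "sorted u"
    using t(2) by (auto simp: u_def sorted_map in_set_conv_nth sorted_iff_nth_mono)
  have len_u: "length u = ?n" using t(1) assms(2) by (simp add: u_def)
  have bound: "Suc (t ! k) \<le> ?n" if "k < ?n - 1" for k
  proof -
    from that t(1) have "t ! k \<in> set t" by simp
    with t(4) assms(2) show ?thesis by fastforce
  qed
  have "Suc i \<le> u ! i \<and> u ! i \<le> ?n" if "i < length u" for i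
  proof (cases i)
    case 0
    with bound[of 0] assms(2) show ?thesis by (simp add: u_def)
  next
    case (Suc k)
    with that len_u have "k < ?n - 1" by simp
    with Suc bound[of k] t(1,3) show ?thesis by (simp add: u_def)
  qed
  with \<open>sorted u\<close> obtain p where p: "length p = ?n" "distinct p" "set p \<subseteq> {1..?n}"
      "\<forall>i<?n. Max (set (take (Suc i) p)) = u ! i"
    using exists_distinct_with_prefix_Max[of u ?n] len_u by auto
  from p(1-3) have "set p = {1..?n}" by (intro card_subset_eq) (simp_all add: distinct_card)
  with exists_list_with_positions[OF assms(1) p(2)] obtain g
    where g: "distinct g" "set g = set s" "map (sigma s) g = p" by blast
  have "F_seq g s = t"
  proof (rule nth_equalityI)
    show "length (F_seq g s) = length t" using t(1) by (simp add: F_seq_def)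
    fix i assume "i < length (F_seq g s)"
    then have i: "i < ?n - 1" by (simp add: F_seq_def)
    have "prefix_positions s g (Suc i) = set (take (Suc (Suc i)) p)"
      using g(3) by (metis prefix_positions_def set_map take_map)
    with p(4) i t(1) have "Max (prefix_positions s g (Suc i)) = Suc (t ! i)"
      by (simp add: u_def)
    then show "F_seq g s ! i = t ! i" using F_seq_nth[OF assms(1) g(1,2) i] by simp
  qed
  with g show ?thesis by blast
qed

lemma roadblock_image:
  assumes "distinct s" "2 \<le> length s"
  shows "(\<lambda>g. roadblock g s) ` cat_vecs (set s) =
    roadblock_of_seq (length s) ` ballot_seqs (length s - 1) (length s - 1)"
proof (intro equalityI subsetI)
  fix B assume "B \<in> (\<lambda>g. roadblock g s) ` cat_vecs (set s)"
  then obtain g where g: "distinct g" "set g = set s" "B = roadblock g s"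
    by (auto simp: cat_vecs_def)
  with assms(1) show "B \<in> roadblock_of_seq (length s) ` ballot_seqs (length s - 1) (length s - 1)"
    using roadblock_eq_roadblock_of_seq F_seq_in_ballot_seqs by blast
next
  fix B assume "B \<in> roadblock_of_seq (length s) ` ballot_seqs (length s - 1) (length s - 1)"
  then obtain t where t: "t \<in> ballot_seqs (length s - 1) (length s - 1)"
      "B = roadblock_of_seq (length s) t"
    by blast
  from F_seq_surj[OF assms t(1)] obtain g where g: "distinct g" "set g = set s" "F_seq g s = t"
    by blast
  with assms(1) t(2) have "B = roadblock g s" by (simp add: roadblock_eq_roadblock_of_seq)
  with g show "B \<in> (\<lambda>g. roadblock g s) ` cat_vecs (set s)" by (auto simp: cat_vecs_def)
qed

theorem proposition2:
  fixes X :: "'a set" and n :: nat and s :: "'a list"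
  assumes "finite X" and "card X = n" and "n \<ge> 2"
    and "s \<in> cat_vecs X"
  shows "(\<exists>f. bij_betw f ((\<lambda>g. roadblock g s) ` cat_vecs X) (dyck_paths (n - 1)))
       \<and> card ((\<lambda>g. roadblock g s) ` cat_vecs X) = (2 * n - 2 choose (n - 1)) div n"
proof -
  from assms(4) have s: "distinct s" "X = set s" by (auto simp: cat_vecs_def)
  with assms(2) have len: "length s = n" by (simp add: distinct_card)
  let ?R = "(\<lambda>g. roadblock g s) ` cat_vecs X"
  have "?R = roadblock_of_seq n ` ballot_seqs (n - 1) (n - 1)"
    using roadblock_image[of s] s len assms(3) by simp
  then have "finite ?R" "card ?R = ballot (n - 1) (n - 1)"
    using card_ballot_seqs[of "n - 1" "n - 1"] card_image[OF inj_on_roadblock_of_seq] by simp_all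
  moreover have "finite (dyck_paths (n - 1))" "card (dyck_paths (n - 1)) = ballot (n - 1) (n - 1)"
    using card_diag_paths[of "n - 1" "n - 1"] by (simp_all add: dyck_paths_eq_diag_paths)
  moreover have "ballot (n - 1) (n - 1) = (2 * n - 2 choose (n - 1)) div n"
    using ballot_diag_eq_catalan[of "n - 1"] assms(3) by (simp add: right_diff_distrib')
  ultimately show ?thesis by (metis bij_betw_iff_card)
qed

end
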